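(* For any compilation chain and any trace relation ${\sim}\subseteq\mathit{Trace}_S\times\mathit{Trace}_T$, with existential and universal images $\tilde\tau,\tilde\sigma$ lifted to hyperproperties, the following are equivalent: (i) $\mathit{SCHP}^{\tilde\tau}$: for every source program $W$ and every subset-closed source hyperproperty $H_S$, if $W\models H_S$ then $W{\downarrow}\models \mathit{Cl}_\subseteq(\tilde\tau(H_S))$; (ii) $\mathit{CC}^{\sim}$; (iii) $\mathit{SCHP}^{\tilde\sigma}$: for every source program $W$ and every subset-closed target hyperproperty $H_T$, if $W\models \mathit{Cl}_\subseteq(\tilde\sigma(H_T))$ then $W{\downarrow}\models H_T$.
   Context: A compilation chain consists of a set of source (whole) programs $W$, target programs, sets $\mathit{Trace}_S$, $\mathit{Trace}_T$ of source and target traces, semantics relations $W\rightsquigarrow t$ (program $W$ can produce trace $t$) at both levels, and a compiler $W\mapsto W{\downarrow}$. The behavior of a program is $\mathit{beh}(W)=\{t\mid W\rightsquigarrow t\}$. A hyperproperty is a set of trace properties (sets of traces); $W\models H$ iff $\mathit{beh}(W)\in H$. $H$ is subset-closed iff $\pi\in H$ and $\pi'\subseteq\pi$ imply $\pi'\in H$. $\mathit{Cl}_\subseteq(H)=\{\pi\mid\exists\pi'\in H.\ \pi\subseteq\pi'\}$. The existential image of $\sim$ is $\tilde\tau(\pi)=\{t\mid\exists s.\ s\sim t\wedge s\in\pi\}$ and its universal image is $\tilde\sigma(\pi)=\{s\mid\forall t.\ s\sim t\Rightarrow t\in\pi\}$; they are lifted to hyperproperties by $\tilde\tau(H_S)=\{\tilde\tau(\pi)\mid\pi\in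 H_S\}$ and $\tilde\sigma(H_T)=\{\tilde\sigma(\pi)\mid\pi\in H_T\}$. $\mathit{CC}^{\sim}$ states: for every $W$ and $t$, if $W{\downarrow}\rightsquigarrow t$ then there is $s\sim t$ with $W\rightsquigarrow s$. *)

theory Defs
  imports Main
begin

definition beh :: "('p \<Rightarrow> 'tr \<Rightarrow> bool) \<Rightarrow> 'p \<Rightarrow> 'tr set" where
  "beh sem W = {t. sem W t}"

definition hsat :: "('p \<Rightarrow> 'tr \<Rightarrow> bool) \<Rightarrow> 'p \<Rightarrow> 'tr set set \<Rightarrow> bool" where
  "hsat sem W H \<longleftrightarrow> beh sem W \<in> H"

definition subset_closed :: "'tr set set \<Rightarrow> bool" where
  "subset_closed H \<longleftrightarrow> (\<forall>\<pi> \<pi>'. \<pi> \<in> H \<longrightarrow> \<pi>' \<subseteq> \<pi> \<longrightarrow> \<pi>' \<in> H)"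

definition Cl_sub :: "'tr set set \<Rightarrow> 'tr set set" where
  "Cl_sub H = {\<pi>. \<exists>\<pi>'\<in>H. \<pi> \<subseteq> \<pi>'}"

definition tau :: "('s \<Rightarrow> 't \<Rightarrow> bool) \<Rightarrow> 's set \<Rightarrow> 't set" where
  "tau rel \<pi> = {t. \<exists>s. rel s t \<and> s \<in> \<pi>}"

definition sigma :: "('s \<Rightarrow> 't \<Rightarrow> bool) \<Rightarrow> 't set \<Rightarrow> 's set" where
  "sigma rel \<pi> = {s. \<forall>t. rel s t \<longrightarrow> t \<in> \<pi>}"

definition tau_hyp :: "('s \<Rightarrow> 't \<Rightarrow> bool) \<Rightarrow> 's set set \<Rightarrow> 't set set" where
  "tau_hyp rel H = {tau rel \<pi> | \<pi>. \<pi> \<in> H}"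

definition sigma_hyp :: "('s \<Rightarrow> 't \<Rightarrow> bool) \<Rightarrow> 't set set \<Rightarrow> 's set set" where
  "sigma_hyp rel H = {sigma rel \<pi> | \<pi>. \<pi> \<in> H}"

definition CC :: "('w \<Rightarrow> 's \<Rightarrow> bool) \<Rightarrow> ('v \<Rightarrow> 't \<Rightarrow> bool) \<Rightarrow> ('w \<Rightarrow> 'v) \<Rightarrow> ('s \<Rightarrow> 't \<Rightarrow> bool) \<Rightarrow> bool" where
  "CC semS semT cmp rel \<longleftrightarrow>
     (\<forall>W t. semT (cmp W) t \<longrightarrow> (\<exists>s. rel s t \<and> semS W s))"

definition SCHP_tau :: "('w \<Rightarrow> 's \<Rightarrow> bool) \<Rightarrow> ('v \<Rightarrow> 't \<Rightarrow> bool) \<Rightarrow> ('w \<Rightarrow> 'v) \<Rightarrow> ('s \<Rightarrow> 't \<Rightarrow> bool) \<Rightarrow> bool" where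
  "SCHP_tau semS semT cmp rel \<longleftrightarrow>
     (\<forall>W H. subset_closed H \<longrightarrow> hsat semS W H \<longrightarrow> hsat semT (cmp W) (Cl_sub (tau_hyp rel H)))"

definition SCHP_sigma :: "('w \<Rightarrow> 's \<Rightarrow> bool) \<Rightarrow> ('v \<Rightarrow> 't \<Rightarrow> bool) \<Rightarrow> ('w \<Rightarrow> 'v) \<Rightarrow> ('s \<Rightarrow> 't \<Rightarrow> bool) \<Rightarrow> bool" where
  "SCHP_sigma semS semT cmp rel \<longleftrightarrow>
     (\<forall>W H. subset_closed H \<longrightarrow> hsat semS W (Cl_sub (sigma_hyp rel H)) \<longrightarrow> hsat semT (cmp W) H)"

end

theory Submission
  imports Defs
begin

text \<open>The existential and universal images form a Galois connection, and \<open>CC\<close> says exactly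
  that \<open>beh (W\<down>) \<subseteq> \<tau>(beh W)\<close>. The powerset of \<open>beh W\<close> is the strongest subset-closed
  hyperproperty satisfied by \<open>W\<close>, and the closures of its images are again powersets; so
  instantiating either preservation property with a powerset gives back \<open>CC\<close>, while \<open>CC\<close> and
  the Galois connection give both preservation properties.\<close>

lemma tau_subset_iff_subset_sigma: "tau rel A \<subseteq> B \<longleftrightarrow> A \<subseteq> sigma rel B"
  unfolding tau_def sigma_def by blast

lemma tau_mono: "A \<subseteq> B \<Longrightarrow> tau rel A \<subseteq> tau rel B"
  unfolding tau_def by blast

lemma sigma_mono: "A \<subseteq> B \<Longrightarrow> sigma rel A \<subseteq> sigma rel B"
  unfolding sigma_def by blast

lemma subset_closed_Pow: "subset_closed (Pow A)"
  unfolding subset_closed_def by blast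

lemma hsat_Pow_iff: "hsat sem W (Pow A) \<longleftrightarrow> beh sem W \<subseteq> A"
  unfolding hsat_def by simp

lemma mem_Cl_sub_tau_hyp_iff: "X \<in> Cl_sub (tau_hyp rel H) \<longleftrightarrow> (\<exists>\<pi>\<in>H. X \<subseteq> tau rel \<pi>)"
  unfolding Cl_sub_def tau_hyp_def by blast

lemma mem_Cl_sub_sigma_hyp_iff: "X \<in> Cl_sub (sigma_hyp rel H) \<longleftrightarrow> (\<exists>\<pi>\<in>H. X \<subseteq> sigma rel \<pi>)"
  unfolding Cl_sub_def sigma_hyp_def by blast

lemma Cl_sub_tau_hyp_Pow: "Cl_sub (tau_hyp rel (Pow A)) = Pow (tau rel A)"
  unfolding mem_Cl_sub_tau_hyp_iff set_eq_iff using tau_mono by fastforce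

lemma Cl_sub_sigma_hyp_Pow: "Cl_sub (sigma_hyp rel (Pow B)) = Pow (sigma rel B)"
  unfolding mem_Cl_sub_sigma_hyp_iff set_eq_iff using sigma_mono by fastforce

lemma CC_iff_beh_subset_tau:
  "CC semS semT cmp rel \<longleftrightarrow> (\<forall>W. beh semT (cmp W) \<subseteq> tau rel (beh semS W))"
  unfolding CC_def beh_def tau_def by auto

lemma SCHP_tau_imp_CC:
  assumes "SCHP_tau semS semT cmp rel"
  shows "CC semS semT cmp rel"
  unfolding CC_iff_beh_subset_tau
proof
  fix W
  have "hsat semS W (Pow (beh semS W))"
    by (simp add: hsat_Pow_iff)
  with assms have "hsat semT (cmp W) (Cl_sub (tau_hyp rel (Pow (beh semS W))))"
    unfolding SCHP_tau_def using subset_closed_Pow by blast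
  then show "beh semT (cmp W) \<subseteq> tau rel (beh semS W)"
    by (simp add: Cl_sub_tau_hyp_Pow hsat_Pow_iff)
qed

lemma CC_imp_SCHP_tau:
  assumes "CC semS semT cmp rel"
  shows "SCHP_tau semS semT cmp rel"
  unfolding SCHP_tau_def
proof (intro allI impI)
  fix W H
  assume "hsat semS W H"
  moreover from assms have "beh semT (cmp W) \<subseteq> tau rel (beh semS W)"
    by (simp add: CC_iff_beh_subset_tau)
  ultimately show "hsat semT (cmp W) (Cl_sub (tau_hyp rel H))"
    unfolding hsat_def mem_Cl_sub_tau_hyp_iff by blast
qed

lemma CC_imp_SCHP_sigma:
  assumes "CC semS semT cmp rel"
  shows "SCHP_sigma semS semT cmp rel"
  unfolding SCHP_sigma_def
proof (intro allI impI)
  fix W H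
  assume closed: "subset_closed H" and "hsat semS W (Cl_sub (sigma_hyp rel H))"
  then obtain \<pi> where "\<pi> \<in> H" and "beh semS W \<subseteq> sigma rel \<pi>"
    unfolding hsat_def mem_Cl_sub_sigma_hyp_iff by blast
  then have "tau rel (beh semS W) \<subseteq> \<pi>"
    by (simp add: tau_subset_iff_subset_sigma)
  moreover from assms have "beh semT (cmp W) \<subseteq> tau rel (beh semS W)"
    by (simp add: CC_iff_beh_subset_tau)
  ultimately show "hsat semT (cmp W) H"
    using closed \<open>\<pi> \<in> H\<close> unfolding hsat_def subset_closed_def by blast
qed

lemma SCHP_sigma_imp_CC:
  assumes "SCHP_sigma semS semT cmp rel"
  shows "CC semS semT cmp rel"
  unfolding CC_iff_beh_subset_tau
proof
  fix W
  let ?A = "tau rel (beh semS W)"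
  have "hsat semS W (Cl_sub (sigma_hyp rel (Pow ?A)))"
    by (simp add: Cl_sub_sigma_hyp_Pow hsat_Pow_iff flip: tau_subset_iff_subset_sigma)
  with assms have "hsat semT (cmp W) (Pow ?A)"
    unfolding SCHP_sigma_def using subset_closed_Pow by blast
  then show "beh semT (cmp W) \<subseteq> ?A"
    by (simp add: hsat_Pow_iff)
qed

theorem theorem2p11:
  fixes semS :: "'w \<Rightarrow> 's \<Rightarrow> bool" and semT :: "'v \<Rightarrow> 't \<Rightarrow> bool"
    and cmp :: "'w \<Rightarrow> 'v" and rel :: "'s \<Rightarrow> 't \<Rightarrow> bool"
  shows "(SCHP_tau semS semT cmp rel \<longleftrightarrow> CC semS semT cmp rel)
       \<and> (CC semS semT cmp rel \<longleftrightarrow> SCHP_sigma semS semT cmp rel)"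
  using SCHP_tau_imp_CC CC_imp_SCHP_tau CC_imp_SCHP_sigma SCHP_sigma_imp_CC by blast

end
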